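(* Let $I\in\mathbb S$ and $\xi\in\mathbb{O}$. Then: (1) $N(g_{I,\xi})(x)=|\Delta_{\xi_I}(x)|^2+2|\xi_I^\perp|^2\big(|x|^2-2\mathrm{Re}(x)\mathrm{Re}(\xi_I)+|\xi_I|^2\big)+|\xi_I^\perp|^4\ge0$ for every $x\in\mathbb{O}$; (2) the zero set of $N(g_{I,\xi})$ equals $\mathbb S_{I,\xi}$.
   Context: Octonions $\mathbb{O}=\mathbb{H}+\ell\mathbb{H}$ (product $(a+\ell b)(c+\ell d)=(ac-d\bar b)+\ell(\bar a d+cb)$, conjugation $\overline{a+\ell b}=\bar a-\ell b$), identified with $\mathbb{R}^8$ with Euclidean norm; $\mathrm{Re}(x)=\frac12(x+\bar x)$, $\mathrm{Im}(x)=\frac12(x-\bar x)$; $\mathbb S=\{I:I^2=-1\}$, $\mathbb C_I=\mathrm{Span}_{\mathbb R}(1,I)$. Slice functions on $\mathbb{O}$: $f(\alpha+\beta J)=F_1(\alpha,\beta)+JF_2(\alpha,\beta)$ ($J\in\mathbb S$) for a stem function $(F_1,F_2):\mathbb{R}^2\to\mathbb{O}^2$, $F_1$ even and $F_2$ odd in $\beta$. The slice product $f\cdot g$ of slice functions induced by $(F_1,F_2),(G_1,G_2)$ is induced by $(F_1G_1-F_2G_2,F_1G_2+F_2G_1)$; $f^c$ is induced by $(\overline{F_1},\overline{F_2})$; the normal function is $N(f)=f\cdot f^c$. For $\eta\in\mathbb{O}$, $\Delta_\eta(x)=x^2-2x\mathrm{Re}(\eta)+|\eta|^2$ and $\mathbb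 S_\eta=\{\mathrm{Re}(\eta)+J|\mathrm{Im}(\eta)|:J\in\mathbb S\}$. For $\xi\in\mathbb{O}$: $\xi_I$ is the orthogonal projection of $\xi$ onto $\mathbb C_I$, $\xi_I^\perp=\xi-\xi_I$, $g_{I,\xi}:\mathbb{O}\to\mathbb{O}$ is the slice function $g_{I,\xi}(x)=|x|^2-x\overline{\xi_I}-\overline{x}\xi_I+|\xi|^2$ (equal to $(\xi_I-x)\cdot(\overline{\xi_I}-\overline x)+|\xi_I^\perp|^2$), and $\mathbb S_{I,\xi}=\mathbb S_\xi$ if $\xi\in\mathbb C_I$, $\mathbb S_{I,\xi}=\emptyset$ otherwise. *)

theory Defs
  imports Complex_Main
begin

datatype quat = Quat (q0: real) (q1: real) (q2: real) (q3: real)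

instantiation quat :: "{zero,one,plus,minus,uminus,times}"
begin
definition "0 = Quat 0 0 0 0"
definition "1 = Quat 1 0 0 0"
definition "a + b = Quat (q0 a + q0 b) (q1 a + q1 b) (q2 a + q2 b) (q3 a + q3 b)"
definition "a - b = Quat (q0 a - q0 b) (q1 a - q1 b) (q2 a - q2 b) (q3 a - q3 b)"
definition "- a = Quat (- q0 a) (- q1 a) (- q2 a) (- q3 a)"
definition "a * b = Quat
   (q0 a * q0 b - q1 a * q1 b - q2 a * q2 b - q3 a * q3 b)
   (q0 a * q1 b + q1 a * q0 b + q2 a * q3 b - q3 a * q2 b)
   (q0 a * q2 b - q1 a * q3 b + q2 a * q0 b + q3 a * q1 b)
   (q0 a * q3 b + q1 a * q2 b - q2 a * q1 b + q3 a * q0 b)"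
instance ..
end

definition qcnj :: "quat \<Rightarrow> quat" where
  "qcnj a = Quat (q0 a) (- q1 a) (- q2 a) (- q3 a)"

definition qsc :: "real \<Rightarrow> quat \<Rightarrow> quat" where
  "qsc r a = Quat (r * q0 a) (r * q1 a) (r * q2 a) (r * q3 a)"

definition qinner :: "quat \<Rightarrow> quat \<Rightarrow> real" where
  "qinner a b = q0 a * q0 b + q1 a * q1 b + q2 a * q2 b + q3 a * q3 b"

text \<open>Oct a b represents a + l b.\<close>
datatype oct = Oct (ofst: quat) (osnd: quat)

instantiation oct :: "{zero,one,plus,minus,uminus,times}"
begin
definition "0 = Oct 0 0"
definition "1 = Oct 1 0"
definition "x + y = Oct (ofst x + ofst y) (osnd x + osnd y)"
definition "x - y = Oct (ofst x - ofst y) (osnd x - osnd y)"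
definition "- x = Oct (- ofst x) (- osnd x)"
text \<open>(a + l b)(c + l d) = (ac - d conj(b)) + l (conj(a) d + c b)\<close>
definition "x * y = Oct (ofst x * ofst y - osnd y * qcnj (osnd x))
                        (qcnj (ofst x) * osnd y + ofst y * osnd x)"
instance ..
end

definition ocnj :: "oct \<Rightarrow> oct" where
  "ocnj x = Oct (qcnj (ofst x)) (- osnd x)"

definition osc :: "real \<Rightarrow> oct \<Rightarrow> oct" where
  "osc r x = Oct (qsc r (ofst x)) (qsc r (osnd x))"

definition ocr :: "real \<Rightarrow> oct" where
  "ocr r = osc r 1"

definition oinner :: "oct \<Rightarrow> oct \<Rightarrow> real" where
  "oinner x y = qinner (ofst x) (ofst y) + qinner (osnd x) (osnd y)"

definition onorm :: "oct \<Rightarrow> real" where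
  "onorm x = sqrt (oinner x x)"

definition oRe :: "oct \<Rightarrow> oct" where
  "oRe x = osc (1/2) (x + ocnj x)"

definition oIm :: "oct \<Rightarrow> oct" where
  "oIm x = osc (1/2) (x - ocnj x)"

definition reP :: "oct \<Rightarrow> real" where
  "reP x = q0 (ofst x)"

definition osph :: "oct set" where
  "osph = {I. I * I = - 1}"

definition CI :: "oct \<Rightarrow> oct set" where
  "CI I = {osc a 1 + osc b I | a b. True}"

definition is_stem :: "(real \<Rightarrow> real \<Rightarrow> oct) \<Rightarrow> (real \<Rightarrow> real \<Rightarrow> oct) \<Rightarrow> bool" where
  "is_stem F1 F2 \<longleftrightarrow> (\<forall>a b. F1 a (- b) = F1 a b \<and> F2 a (- b) = - F2 a b)"

definition is_stem_of :: "(oct \<Rightarrow> oct) \<Rightarrow> (real \<Rightarrow> real \<Rightarrow> oct) \<Rightarrow> (real \<Rightarrow> real \<Rightarrow> oct) \<Rightarrow> bool" where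
  "is_stem_of f F1 F2 \<longleftrightarrow> is_stem F1 F2 \<and>
     (\<forall>a b J. J \<in> osph \<longrightarrow> f (ocr a + osc b J) = F1 a b + J * F2 a b)"

text \<open>the slice function induced by a stem function (x = Re x + |Im x| J with J = Im x / |Im x|)\<close>
definition induced :: "(real \<Rightarrow> real \<Rightarrow> oct) \<Rightarrow> (real \<Rightarrow> real \<Rightarrow> oct) \<Rightarrow> oct \<Rightarrow> oct" where
  "induced F1 F2 x =
     (if oIm x = 0 then F1 (reP x) 0
      else F1 (reP x) (onorm (oIm x)) + osc (1 / onorm (oIm x)) (oIm x) * F2 (reP x) (onorm (oIm x)))"

definition slice_function :: "(oct \<Rightarrow> oct) \<Rightarrow> bool" where
  "slice_function f \<longleftrightarrow> (\<exists>F1 F2. is_stem_of f F1 F2)"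

definition slice_mult :: "(oct \<Rightarrow> oct) \<Rightarrow> (oct \<Rightarrow> oct) \<Rightarrow> oct \<Rightarrow> oct" where
  "slice_mult f g =
     (let (F1, F2) = (SOME (F1, F2). is_stem_of f F1 F2);
          (G1, G2) = (SOME (G1, G2). is_stem_of g G1 G2)
      in induced (\<lambda>a b. F1 a b * G1 a b - F2 a b * G2 a b)
                 (\<lambda>a b. F1 a b * G2 a b + F2 a b * G1 a b))"

definition slice_cnj :: "(oct \<Rightarrow> oct) \<Rightarrow> oct \<Rightarrow> oct" where
  "slice_cnj f =
     (let (F1, F2) = (SOME (F1, F2). is_stem_of f F1 F2)
      in induced (\<lambda>a b. ocnj (F1 a b)) (\<lambda>a b. ocnj (F2 a b)))"

definition normal_fun :: "(oct \<Rightarrow> oct) \<Rightarrow> oct \<Rightarrow> oct" where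
  "normal_fun f = slice_mult f (slice_cnj f)"

definition Delta :: "oct \<Rightarrow> oct \<Rightarrow> oct" where
  "Delta \<eta> x = x * x - osc (2 * reP \<eta>) x + ocr ((onorm \<eta>)\<^sup>2)"

definition S_of :: "oct \<Rightarrow> oct set" where
  "S_of \<eta> = {oRe \<eta> + osc (onorm (oIm \<eta>)) J | J. J \<in> osph}"

text \<open>orthogonal projection onto C_I = span(1, I); for I in the sphere, {1, I} is orthonormal\<close>
definition projI :: "oct \<Rightarrow> oct \<Rightarrow> oct" where
  "projI I \<xi> = osc (oinner \<xi> 1) 1 + osc (oinner \<xi> I) I"

definition perpI :: "oct \<Rightarrow> oct \<Rightarrow> oct" where
  "perpI I \<xi> = \<xi> - projI I \<xi>"

definition gIxi :: "oct \<Rightarrow> oct \<Rightarrow> oct \<Rightarrow> oct" where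
  "gIxi I \<xi> x = ocr ((onorm x)\<^sup>2) - x * ocnj (projI I \<xi>) - ocnj x * projI I \<xi> + ocr ((onorm \<xi>)\<^sup>2)"

definition S_Ixi :: "oct \<Rightarrow> oct \<Rightarrow> oct set" where
  "S_Ixi I \<xi> = (if \<xi> \<in> CI I then S_of \<xi> else {})"

end

theory Submission
  imports Defs
begin

(* The function g_{I,xi} is induced by the stem function F1(a,b) = a^2 + b^2 - 2 a Re(xi) + |xi|^2,
   which is real, and F2(a,b) = 2 b <xi,I> I, which lies on the line through I. Hence the mixed
   terms F1 conj(F2) + F2 conj(F1) cancel and N(g_{I,xi}) is the real slice function
   (|x|^2 - 2 Re(x) Re(xi) + |xi|^2)^2 - 4 |Im(x)|^2 <xi,I>^2. Splitting
   |xi|^2 = |xi_I|^2 + |xi_I^perp|^2 rewrites it as |Delta_{xi_I}(x)|^2 plus two terms that are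
   nonnegative because |x|^2 - 2 Re(x) Re(y) + |y|^2 = (Re x - Re y)^2 + |Im x|^2 + |Im y|^2.
   So N(g_{I,xi})(x) vanishes iff xi_I^perp = 0, i.e. xi lies in C_I, and Delta_xi(x) = 0, i.e.
   x lies in S_xi. *)

lemmas quat_defs = zero_quat_def one_quat_def plus_quat_def minus_quat_def uminus_quat_def
  times_quat_def qcnj_def qsc_def qinner_def

lemmas oct_defs = zero_oct_def one_oct_def plus_oct_def minus_oct_def uminus_oct_def
  times_oct_def ocnj_def osc_def ocr_def oinner_def reP_def oIm_def oRe_def

lemma oct_eq_iff:
  "x = y \<longleftrightarrow>
     q0 (ofst x) = q0 (ofst y) \<and> q1 (ofst x) = q1 (ofst y) \<and>
     q2 (ofst x) = q2 (ofst y) \<and> q3 (ofst x) = q3 (ofst y) \<and>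
     q0 (osnd x) = q0 (osnd y) \<and> q1 (osnd x) = q1 (osnd y) \<and>
     q2 (osnd x) = q2 (osnd y) \<and> q3 (osnd x) = q3 (osnd y)"
  by (cases x; cases y; rename_tac a b c d; case_tac a; case_tac b; case_tac c; case_tac d; auto)

lemma oct_coords_exhaust:
  obtains a b c d e f g h where "x = Oct (Quat a b c d) (Quat e f g h)"
  by (metis oct.exhaust quat.exhaust)

lemma oct_add_zero_right [simp]: "x + 0 = (x :: oct)"
  unfolding oct_eq_iff by (simp add: oct_defs quat_defs)

lemma oct_mult_zero_right [simp]: "x * 0 = (0 :: oct)"
  unfolding oct_eq_iff by (simp add: oct_defs quat_defs)

lemma oct_diff_eq_0_iff: "x - y = 0 \<longleftrightarrow> x = (y :: oct)"
  unfolding oct_eq_iff by (auto simp: oct_defs quat_defs)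

lemma oct_eq_neg_iff: "x = - x \<longleftrightarrow> x = (0 :: oct)"
  unfolding oct_eq_iff by (auto simp: oct_defs quat_defs)

lemma ocnj_uminus: "ocnj (- x) = - ocnj x"
  unfolding oct_eq_iff by (simp add: oct_defs quat_defs)

lemma ocr_eq_0_iff [simp]: "ocr r = 0 \<longleftrightarrow> r = 0"
  unfolding oct_eq_iff by (simp add: oct_defs quat_defs)

lemma osc_osc [simp]: "osc a (osc b x) = osc (a * b) x"
  unfolding oct_eq_iff by (simp add: oct_defs quat_defs)

lemma osc_0 [simp]: "osc 0 x = 0"
  unfolding oct_eq_iff by (simp add: oct_defs quat_defs)

lemma osc_1 [simp]: "osc 1 x = x"
  unfolding oct_eq_iff by (simp add: oct_defs quat_defs)

lemma reP_osc [simp]: "reP (osc c x) = c * reP x"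
  by (simp add: oct_defs quat_defs)

lemma reP_oIm [simp]: "reP (oIm x) = 0"
  by (simp add: oct_defs quat_defs)

lemma oRe_eq_ocr_reP: "oRe x = ocr (reP x)"
  unfolding oct_eq_iff by (simp add: oct_defs quat_defs)

lemma ocr_reP_plus_oIm: "ocr (reP x) + oIm x = x"
  unfolding oct_eq_iff by (simp add: oct_defs quat_defs)

lemma oIm_ocr_plus_osc: "reP J = 0 \<Longrightarrow> oIm (ocr a + osc b J) = osc b J"
  unfolding oct_eq_iff by (simp add: oct_defs quat_defs)

lemma oinner_osc_osc: "oinner (osc a x) (osc b y) = a * b * oinner x y"
  by (simp add: oct_defs quat_defs algebra_simps)

lemma reP_1 [simp]: "reP 1 = 1"
  by (simp add: oct_defs quat_defs)

lemma reP_ocr [simp]: "reP (ocr r) = r"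
  by (simp add: oct_defs quat_defs)

lemma reP_add [simp]: "reP (x + y) = reP x + reP y"
  by (simp add: oct_defs quat_defs)

lemma oinner_commute: "oinner x y = oinner y x"
  by (simp add: oinner_def qinner_def algebra_simps)

lemma oinner_1_left [simp]: "oinner 1 y = reP y"
  by (simp add: oct_defs quat_defs)

lemma oinner_1_right [simp]: "oinner y 1 = reP y"
  by (simp add: oct_defs quat_defs)

lemma oinner_osc_add_osc_left: "oinner (osc a x + osc b z) y = a * oinner x y + b * oinner z y"
  by (simp add: oct_defs quat_defs algebra_simps)

lemma oinner_osc_add_osc_right: "oinner y (osc a x + osc b z) = a * oinner y x + b * oinner y z"
  by (simp add: oct_defs quat_defs algebra_simps)

lemma oinner_self_nonneg: "oinner x x \<ge> 0"
  by (simp add: oinner_def qinner_def)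

lemma oinner_self_eq_0_iff: "oinner x x = 0 \<longleftrightarrow> x = 0"
proof
  assume "oinner x x = 0"
  obtain a b c d e f g h where x: "x = Oct (Quat a b c d) (Quat e f g h)"
    by (rule oct_coords_exhaust)
  have "a\<^sup>2 + b\<^sup>2 + c\<^sup>2 + d\<^sup>2 + e\<^sup>2 + f\<^sup>2 + g\<^sup>2 + h\<^sup>2 = 0"
    using \<open>oinner x x = 0\<close> unfolding x by (simp add: oinner_def qinner_def power2_eq_square)
  then have "a = 0 \<and> b = 0 \<and> c = 0 \<and> d = 0 \<and> e = 0 \<and> f = 0 \<and> g = 0 \<and> h = 0"
    by (simp add: add_nonneg_eq_0_iff)
  then show "x = 0"
    unfolding x by (simp add: oct_defs quat_defs)
qed (simp add: oct_defs quat_defs)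

lemma onorm_sq: "(onorm x)\<^sup>2 = oinner x x"
  unfolding onorm_def by (simp add: oinner_self_nonneg)

lemma onorm_nonneg: "onorm x \<ge> 0"
  unfolding onorm_def by (simp add: oinner_self_nonneg)

lemma onorm_eq_0_iff: "onorm x = 0 \<longleftrightarrow> x = 0"
  unfolding onorm_def by (simp add: oinner_self_eq_0_iff)

lemma onorm_zero [simp]: "onorm 0 = 0"
  by (simp add: onorm_eq_0_iff)

lemma onorm_osc: "onorm (osc c x) = \<bar>c\<bar> * onorm x"
  unfolding onorm_def oinner_osc_osc by (simp add: real_sqrt_mult power2_eq_square[symmetric])

lemma onorm_sq_eq_reP_oIm: "(onorm x)\<^sup>2 = (reP x)\<^sup>2 + (onorm (oIm x))\<^sup>2"
  unfolding onorm_sq by (simp add: oct_defs quat_defs algebra_simps power2_eq_square)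

lemma osph_iff: "J \<in> osph \<longleftrightarrow> reP J = 0 \<and> oinner J J = 1"
proof
  assume "J \<in> osph"
  obtain a b c d e f g h where J: "J = Oct (Quat a b c d) (Quat e f g h)"
    by (rule oct_coords_exhaust)
  have "J * J = - 1"
    using \<open>J \<in> osph\<close> by (simp add: osph_def)
  then have sq: "a*a - b*b - c*c - d*d - e*e - f*f - g*g - h*h = -1"
    and cross: "a*b = 0" "a*c = 0" "a*d = 0" "a*e = 0" "a*f = 0" "a*g = 0" "a*h = 0"
    unfolding J oct_eq_iff by (simp_all add: oct_defs quat_defs algebra_simps)
  have "a = 0"
  proof (rule ccontr)
    assume "a \<noteq> 0"
    with cross have "b = 0" "c = 0" "d = 0" "e = 0" "f = 0" "g = 0" "h = 0"
      by auto
    with sq have "a * a = -1" by simp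
    then show False
      by (metis add.inverse_neutral mult_zero_left neg_0_le_iff_le not_one_le_zero zero_le_square)
  qed
  with sq show "reP J = 0 \<and> oinner J J = 1"
    unfolding J by (simp add: oct_defs quat_defs algebra_simps)
next
  assume "reP J = 0 \<and> oinner J J = 1"
  moreover have "J * J = osc (2 * reP J) J - ocr (oinner J J)"
    unfolding oct_eq_iff by (simp add: oct_defs quat_defs algebra_simps power2_eq_square)
  ultimately have "J * J = osc 0 J - ocr 1"
    by simp
  then show "J \<in> osph"
    unfolding osph_def oct_eq_iff by (simp add: oct_defs quat_defs)
qed

lemma onorm_osph: "J \<in> osph \<Longrightarrow> onorm J = 1"
  unfolding onorm_def osph_iff by simp

lemma Oct_quat_i_in_osph: "Oct (Quat 0 1 0 0) 0 \<in> osph"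
  by (simp add: osph_iff oct_defs quat_defs)

lemma uminus_osph: "J \<in> osph \<Longrightarrow> - J \<in> osph"
  by (simp add: osph_def oct_eq_iff oct_defs quat_defs)

lemma osc_osph_eq_0_iff: "J \<in> osph \<Longrightarrow> osc c J = 0 \<longleftrightarrow> c = 0"
  by (metis onorm_eq_0_iff onorm_osc onorm_osph abs_eq_0 mult_1_right)

lemma is_stem_of_induced:
  assumes stem: "is_stem F1 F2"
  shows "is_stem_of (induced F1 F2) F1 F2"
  unfolding is_stem_of_def
proof (intro conjI allI impI)
  show "is_stem F1 F2" by fact
  fix a b J
  assume J: "J \<in> osph"
  then have reJ: "reP J = 0"
    by (simp add: osph_iff)
  have re: "reP (ocr a + osc b J) = a" and im: "oIm (ocr a + osc b J) = osc b J"
    by (simp_all add: oIm_ocr_plus_osc reJ)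
  have norm: "onorm (osc b J) = \<bar>b\<bar>"
    by (simp add: onorm_osc onorm_osph J)
  consider "b = 0" | "b > 0" | "b < 0"
    by linarith
  then show "induced F1 F2 (ocr a + osc b J) = F1 a b + J * F2 a b"
  proof cases
    case 1
    have "F2 a 0 = - F2 a 0"
      using stem unfolding is_stem_def by (metis minus_zero)
    then have "F2 a 0 = 0"
      by (simp add: oct_eq_neg_iff)
    with 1 show ?thesis
      unfolding induced_def re im by (simp add: osc_osph_eq_0_iff J)
  next
    case 2
    then show ?thesis
      unfolding induced_def re im norm by (simp add: osc_osph_eq_0_iff J)
  next
    case 3
    have "F1 a (- b) = F1 a b" "F2 a (- b) = - F2 a b"
      using stem unfolding is_stem_def by auto
    moreover have "osc (-1) J * (- y) = J * y" for y
      unfolding oct_eq_iff by (simp add: oct_defs quat_defs)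
    ultimately show ?thesis
      using 3 unfolding induced_def re im norm by (simp add: osc_osph_eq_0_iff J)
  qed
qed

(* Evaluating at the two opposite units J and -J of one slice separates the two components. *)
lemma is_stem_of_unique:
  assumes "is_stem_of f F1 F2" "is_stem_of f G1 G2"
  shows "G1 = F1" "G2 = F2"
proof -
  define J where "J = Oct (Quat 0 1 0 0) 0"
  have J: "J \<in> osph" "- J \<in> osph"
    unfolding J_def by (simp_all add: Oct_quat_i_in_osph uminus_osph)
  have "F1 a b = G1 a b \<and> F2 a b = G2 a b" for a b
  proof -
    have "F1 a b + J * F2 a b = G1 a b + J * G2 a b"
      and "F1 a b + (- J) * F2 a b = G1 a b + (- J) * G2 a b"
      using assms J unfolding is_stem_of_def by metis+
    then show ?thesis
      unfolding J_def oct_eq_iff by (simp add: oct_defs quat_defs)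
  qed
  then show "G1 = F1" "G2 = F2"
    by (auto intro!: ext)
qed

lemma some_stem_eq:
  assumes "is_stem_of f F1 F2"
  shows "(SOME (G1, G2). is_stem_of f G1 G2) = (F1, F2)"
proof -
  obtain G1 G2 where G: "(SOME (G1, G2). is_stem_of f G1 G2) = (G1, G2)"
    by fastforce
  have "\<exists>p. (\<lambda>(G1, G2). is_stem_of f G1 G2) p"
    using assms by auto
  from someI_ex [OF this] have "is_stem_of f G1 G2"
    unfolding G by simp
  with G show ?thesis
    using is_stem_of_unique [OF assms] by simp
qed

lemma normal_fun_eq_induced:
  assumes f: "is_stem_of f F1 F2"
  shows "normal_fun f =
    induced (\<lambda>a b. F1 a b * ocnj (F1 a b) - F2 a b * ocnj (F2 a b))
            (\<lambda>a b. F1 a b * ocnj (F2 a b) + F2 a b * ocnj (F1 a b))"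
proof -
  have "is_stem F1 F2"
    using f by (simp add: is_stem_of_def)
  then have "is_stem (\<lambda>a b. ocnj (F1 a b)) (\<lambda>a b. ocnj (F2 a b))"
    by (simp add: is_stem_def ocnj_uminus)
  then have "is_stem_of (slice_cnj f) (\<lambda>a b. ocnj (F1 a b)) (\<lambda>a b. ocnj (F2 a b))"
    unfolding slice_cnj_def some_stem_eq [OF f] by (simp add: is_stem_of_induced)
  then show ?thesis
    unfolding normal_fun_def slice_mult_def some_stem_eq [OF f] by (simp add: some_stem_eq)
qed

lemma induced_ocr_0:
  "induced (\<lambda>a b. ocr (h a b)) (\<lambda>a b. 0) x = ocr (h (reP x) (onorm (oIm x)))"
  by (simp add: induced_def)

lemma is_stem_of_gIxi:
  assumes I: "I \<in> osph"
  shows "is_stem_of (gIxi I \<xi>)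
           (\<lambda>a b. ocr (a\<^sup>2 + b\<^sup>2 - 2 * a * reP \<xi> + (onorm \<xi>)\<^sup>2))
           (\<lambda>a b. osc (2 * b * oinner \<xi> I) I)"
  unfolding is_stem_of_def
proof (intro conjI allI impI)
  show "is_stem (\<lambda>a b. ocr (a\<^sup>2 + b\<^sup>2 - 2 * a * reP \<xi> + (onorm \<xi>)\<^sup>2))
                (\<lambda>a b. osc (2 * b * oinner \<xi> I) I)"
    unfolding is_stem_def oct_eq_iff by (simp add: oct_defs quat_defs)
  fix a b J
  assume "J \<in> osph"
  then have J: "reP J = 0" "oinner J J = 1"
    by (simp_all add: osph_iff)
  from I have reI: "reP I = 0"
    by (simp add: osph_iff)
  have "oinner (ocr a + osc b J) (ocr a + osc b J) = a\<^sup>2 + 2 * a * b * reP J + b\<^sup>2 * oinner J J"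
    by (simp add: oct_defs quat_defs algebra_simps power2_eq_square)
  then have "(onorm (ocr a + osc b J))\<^sup>2 = a\<^sup>2 + b\<^sup>2"
    unfolding onorm_sq J by simp
  moreover have "ocr u - (ocr a + osc b J) * ocnj (osc p0 1 + osc p1 I)
      - ocnj (ocr a + osc b J) * (osc p0 1 + osc p1 I) + ocr k
      = ocr (u - 2 * a * p0 + k) + J * osc (2 * b * p1) I" for u p0 p1 k
    unfolding oct_eq_iff using J reI by (simp add: oct_defs quat_defs algebra_simps)
  ultimately show "gIxi I \<xi> (ocr a + osc b J) =
      ocr (a\<^sup>2 + b\<^sup>2 - 2 * a * reP \<xi> + (onorm \<xi>)\<^sup>2) + J * osc (2 * b * oinner \<xi> I) I"
    unfolding gIxi_def projI_def by simp
qed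

lemma normal_fun_gIxi:
  assumes I: "I \<in> osph"
  shows "normal_fun (gIxi I \<xi>) x =
    ocr (((onorm x)\<^sup>2 - 2 * reP x * reP \<xi> + (onorm \<xi>)\<^sup>2)\<^sup>2
         - 4 * (onorm (oIm x))\<^sup>2 * (oinner \<xi> I)\<^sup>2)"
proof -
  from I have reI: "reP I = 0" and nI: "oinner I I = 1"
    by (simp_all add: osph_iff)
  have "ocr r * ocnj (ocr r) - osc c I * ocnj (osc c I) = ocr (r\<^sup>2 - c\<^sup>2 * oinner I I)" for r c
    unfolding oct_eq_iff by (simp add: oct_defs quat_defs algebra_simps power2_eq_square)
  then have norm_part: "ocr r * ocnj (ocr r) - osc c I * ocnj (osc c I) = ocr (r\<^sup>2 - c\<^sup>2)" for r c
    by (simp add: nI)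
  have cross_part: "ocr r * ocnj (osc c I) + osc c I * ocnj (ocr r) = 0" for r c
    unfolding oct_eq_iff using reI by (simp add: oct_defs quat_defs algebra_simps)
  show ?thesis
    unfolding normal_fun_eq_induced [OF is_stem_of_gIxi [OF I]] norm_part cross_part
      induced_ocr_0 onorm_sq_eq_reP_oIm [of x]
    by (simp add: power_mult_distrib)
qed

lemma reP_projI: "I \<in> osph \<Longrightarrow> reP (projI I \<xi>) = reP \<xi>"
  by (simp add: projI_def osph_iff oct_defs quat_defs)

lemma onorm_oIm_projI: "I \<in> osph \<Longrightarrow> onorm (oIm (projI I \<xi>)) = \<bar>oinner \<xi> I\<bar>"
proof -
  assume I: "I \<in> osph"
  then have "oIm (projI I \<xi>) = osc (oinner \<xi> I) I"
    unfolding projI_def oct_eq_iff by (simp add: osph_iff oct_defs quat_defs)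
  with I show ?thesis
    by (simp add: onorm_osc onorm_osph)
qed

lemma onorm_sq_projI_perpI:
  assumes I: "I \<in> osph"
  shows "(onorm \<xi>)\<^sup>2 = (onorm (projI I \<xi>))\<^sup>2 + (onorm (perpI I \<xi>))\<^sup>2"
proof -
  from I have reI: "reP I = 0" and nI: "oinner I I = 1"
    by (simp_all add: osph_iff)
  define q where "q = projI I \<xi>"
  have q: "q = osc (reP \<xi>) 1 + osc (oinner \<xi> I) I"
    by (simp add: q_def projI_def)
  have "oinner q \<xi> = (reP \<xi>)\<^sup>2 + (oinner \<xi> I)\<^sup>2"
    unfolding q oinner_osc_add_osc_left by (simp add: oinner_commute [of I] power2_eq_square)
  moreover have "oinner q q = (reP \<xi>)\<^sup>2 + (oinner \<xi> I)\<^sup>2"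
    unfolding q using reI nI
    by (simp add: oinner_osc_add_osc_left oinner_osc_add_osc_right power2_eq_square)
  moreover have "oinner \<xi> \<xi> = oinner q q + 2 * (oinner q \<xi> - oinner q q) + oinner (\<xi> - q) (\<xi> - q)"
    by (simp add: oct_defs quat_defs algebra_simps)
  ultimately show ?thesis
    unfolding onorm_sq perpI_def q_def [symmetric] by (simp add: algebra_simps)
qed

lemma perpI_eq_0_iff:
  assumes I: "I \<in> osph"
  shows "perpI I \<xi> = 0 \<longleftrightarrow> \<xi> \<in> CI I"
proof
  assume "perpI I \<xi> = 0"
  then have "\<xi> = osc (oinner \<xi> 1) 1 + osc (oinner \<xi> I) I"
    by (simp only: perpI_def projI_def oct_diff_eq_0_iff)
  then show "\<xi> \<in> CI I"
    unfolding CI_def by blast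
next
  assume "\<xi> \<in> CI I"
  then obtain a b where \<xi>: "\<xi> = osc a 1 + osc b I"
    unfolding CI_def by blast
  from I have "reP I = 0" "oinner I I = 1"
    by (simp_all add: osph_iff)
  then have "reP \<xi> = a" "oinner \<xi> I = b"
    unfolding \<xi> by (simp_all add: oinner_osc_add_osc_left)
  then have "projI I \<xi> = osc a 1 + osc b I"
    by (simp add: projI_def)
  then show "perpI I \<xi> = 0"
    by (simp add: perpI_def \<xi> oct_diff_eq_0_iff)
qed

lemma onorm_Delta_sq:
  "(onorm (Delta \<eta> x))\<^sup>2 =
     ((reP x)\<^sup>2 - (onorm (oIm x))\<^sup>2 - 2 * reP \<eta> * reP x + (onorm \<eta>)\<^sup>2)\<^sup>2
     + 4 * (reP x - reP \<eta>)\<^sup>2 * (onorm (oIm x))\<^sup>2"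
proof -
  have "oinner (x * x - osc (2 * p) x + ocr c) (x * x - osc (2 * p) x + ocr c) =
          ((reP x)\<^sup>2 - oinner (oIm x) (oIm x) - 2 * p * reP x + c)\<^sup>2
          + 4 * (reP x - p)\<^sup>2 * oinner (oIm x) (oIm x)" for p c
    by (simp add: oct_defs quat_defs algebra_simps power2_eq_square)
  then show ?thesis
    unfolding Delta_def onorm_sq .
qed

lemma S_of_iff: "x \<in> S_of \<eta> \<longleftrightarrow> reP x = reP \<eta> \<and> onorm (oIm x) = onorm (oIm \<eta>)"
proof
  assume "x \<in> S_of \<eta>"
  then obtain J where x: "x = ocr (reP \<eta>) + osc (onorm (oIm \<eta>)) J" and J: "J \<in> osph"
    unfolding S_of_def oRe_eq_ocr_reP by blast
  from J have "reP J = 0"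
    by (simp add: osph_iff)
  with J show "reP x = reP \<eta> \<and> onorm (oIm x) = onorm (oIm \<eta>)"
    unfolding x by (simp add: oIm_ocr_plus_osc onorm_osc onorm_osph onorm_nonneg)
next
  assume x: "reP x = reP \<eta> \<and> onorm (oIm x) = onorm (oIm \<eta>)"
  define \<beta> where "\<beta> = onorm (oIm \<eta>)"
  obtain J where J: "J \<in> osph" and "oIm x = osc \<beta> J"
  proof (cases "\<beta> = 0")
    case True
    with x have "oIm x = 0"
      by (simp add: \<beta>_def onorm_eq_0_iff)
    with True show ?thesis
      using that Oct_quat_i_in_osph by simp
  next
    case False
    have "onorm (osc (1 / \<beta>) (oIm x)) = 1"
      using x False by (simp add: \<beta>_def onorm_osc onorm_nonneg)
    then have "osc (1 / \<beta>) (oIm x) \<in> osph"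
      unfolding osph_iff by (simp add: onorm_sq [symmetric])
    with False show ?thesis
      using that by simp
  qed
  with x have "x = oRe \<eta> + osc (onorm (oIm \<eta>)) J"
    using ocr_reP_plus_oIm [of x] by (simp add: \<beta>_def oRe_eq_ocr_reP)
  with J show "x \<in> S_of \<eta>"
    unfolding S_of_def by blast
qed

lemma Delta_eq_0_iff: "Delta \<eta> x = 0 \<longleftrightarrow> x \<in> S_of \<eta>"
proof -
  have quartic_eq_0:
    "(t\<^sup>2 - b\<^sup>2 + \<beta>\<^sup>2)\<^sup>2 + 4 * t\<^sup>2 * b\<^sup>2 = 0 \<longleftrightarrow> t = 0 \<and> b = \<beta>"
    if "b \<ge> 0" "\<beta> \<ge> 0" for t b \<beta> :: real
  proof
    assume "(t\<^sup>2 - b\<^sup>2 + \<beta>\<^sup>2)\<^sup>2 + 4 * t\<^sup>2 * b\<^sup>2 = 0"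
    then have "t\<^sup>2 - b\<^sup>2 + \<beta>\<^sup>2 = 0" and "t = 0 \<or> b = 0"
      by (simp_all add: add_nonneg_eq_0_iff)
    then show "t = 0 \<and> b = \<beta>"
      using that by (auto simp: add_nonneg_eq_0_iff power2_eq_iff_nonneg)
  qed simp
  have "(onorm (Delta \<eta> x))\<^sup>2 =
          ((reP x - reP \<eta>)\<^sup>2 - (onorm (oIm x))\<^sup>2 + (onorm (oIm \<eta>))\<^sup>2)\<^sup>2
          + 4 * (reP x - reP \<eta>)\<^sup>2 * (onorm (oIm x))\<^sup>2"
    unfolding onorm_Delta_sq onorm_sq_eq_reP_oIm [of \<eta>] by (simp add: power2_eq_square algebra_simps)
  then have "Delta \<eta> x = 0 \<longleftrightarrow> reP x - reP \<eta> = 0 \<and> onorm (oIm x) = onorm (oIm \<eta>)"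
    by (metis onorm_eq_0_iff onorm_nonneg quartic_eq_0 zero_power2)
  then show ?thesis
    by (simp add: S_of_iff)
qed

lemma onorm_sq_minus_reP_nonneg: "0 \<le> (onorm x)\<^sup>2 - 2 * reP x * reP y + (onorm y)\<^sup>2"
proof -
  have "(onorm x)\<^sup>2 - 2 * reP x * reP y + (onorm y)\<^sup>2
          = (reP x - reP y)\<^sup>2 + (onorm (oIm x))\<^sup>2 + (onorm (oIm y))\<^sup>2"
    unfolding onorm_sq_eq_reP_oIm [of x] onorm_sq_eq_reP_oIm [of y]
    by (simp add: power2_eq_square algebra_simps)
  then show ?thesis
    by simp
qed

lemma normal_fun_gIxi_eq:
  assumes I: "I \<in> osph"
  shows "normal_fun (gIxi I \<xi>) x =
    ocr ((onorm (Delta (projI I \<xi>) x))\<^sup>2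
         + 2 * (onorm (perpI I \<xi>))\<^sup>2 *
             ((onorm x)\<^sup>2 - 2 * reP x * reP (projI I \<xi>) + (onorm (projI I \<xi>))\<^sup>2)
         + (onorm (perpI I \<xi>))^4)"
proof -
  define a b \<alpha> \<beta> E
    where "a = reP x" and "b = onorm (oIm x)" and "\<alpha> = reP \<xi>" and "\<beta> = oinner \<xi> I"
      and "E = (onorm (perpI I \<xi>))\<^sup>2"
  have re_q: "reP (projI I \<xi>) = \<alpha>"
    by (simp add: \<alpha>_def reP_projI I)
  have norm_q: "(onorm (projI I \<xi>))\<^sup>2 = \<alpha>\<^sup>2 + \<beta>\<^sup>2"
    unfolding onorm_sq_eq_reP_oIm [of "projI I \<xi>"] by (simp add: re_q onorm_oIm_projI I \<beta>_def)
  have norm_x: "(onorm x)\<^sup>2 = a\<^sup>2 + b\<^sup>2"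
    unfolding a_def b_def by (rule onorm_sq_eq_reP_oIm)
  have norm_\<xi>: "(onorm \<xi>)\<^sup>2 = \<alpha>\<^sup>2 + \<beta>\<^sup>2 + E"
    by (subst onorm_sq_projI_perpI [OF I]) (simp add: norm_q E_def)
  have norm_Delta: "(onorm (Delta (projI I \<xi>) x))\<^sup>2 =
      (a\<^sup>2 - b\<^sup>2 - 2 * \<alpha> * a + \<alpha>\<^sup>2 + \<beta>\<^sup>2)\<^sup>2 + 4 * (a - \<alpha>)\<^sup>2 * b\<^sup>2"
    unfolding onorm_Delta_sq re_q norm_q by (simp add: a_def b_def add.assoc)
  have norm_perp4: "(onorm (perpI I \<xi>))^4 = E\<^sup>2"
    by (simp add: E_def flip: power_mult)
  have "normal_fun (gIxi I \<xi>) x = ocr ((a\<^sup>2 + b\<^sup>2 - 2 * a * \<alpha> + (\<alpha>\<^sup>2 + \<beta>\<^sup>2 + E))\<^sup>2 - 4 * b\<^sup>2 * \<beta>\<^sup>2)"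
    unfolding normal_fun_gIxi [OF I] norm_x norm_\<xi> by (simp add: a_def b_def \<alpha>_def \<beta>_def)
  also have "\<dots> = ocr ((a\<^sup>2 - b\<^sup>2 - 2 * \<alpha> * a + \<alpha>\<^sup>2 + \<beta>\<^sup>2)\<^sup>2 + 4 * (a - \<alpha>)\<^sup>2 * b\<^sup>2
                        + 2 * E * (a\<^sup>2 + b\<^sup>2 - 2 * a * \<alpha> + (\<alpha>\<^sup>2 + \<beta>\<^sup>2)) + E\<^sup>2)"
    by (rule arg_cong [where f = ocr]) algebra
  also have "\<dots> = ocr ((onorm (Delta (projI I \<xi>) x))\<^sup>2
         + 2 * (onorm (perpI I \<xi>))\<^sup>2 *
             ((onorm x)\<^sup>2 - 2 * reP x * reP (projI I \<xi>) + (onorm (projI I \<xi>))\<^sup>2)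
         + (onorm (perpI I \<xi>))^4)"
    unfolding norm_Delta norm_perp4 re_q norm_q norm_x E_def a_def ..
  finally show ?thesis .
qed

lemma normal_fun_gIxi_eq_0_iff:
  assumes I: "I \<in> osph"
  shows "normal_fun (gIxi I \<xi>) x = 0 \<longleftrightarrow> x \<in> S_Ixi I \<xi>"
proof -
  have sum_eq_0: "d\<^sup>2 + 2 * e\<^sup>2 * M + e^4 = 0 \<longleftrightarrow> d = 0 \<and> e = 0" if "0 \<le> M" for d e M :: real
    using that by (auto simp: add_nonneg_eq_0_iff)
  have "normal_fun (gIxi I \<xi>) x = 0 \<longleftrightarrow> Delta (projI I \<xi>) x = 0 \<and> perpI I \<xi> = 0"
    unfolding normal_fun_gIxi_eq [OF I] ocr_eq_0_iff sum_eq_0 [OF onorm_sq_minus_reP_nonneg]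
    by (simp add: onorm_eq_0_iff)
  also have "\<dots> \<longleftrightarrow> x \<in> S_Ixi I \<xi>"
  proof (cases "\<xi> \<in> CI I")
    case True
    then have "perpI I \<xi> = 0"
      by (simp add: perpI_eq_0_iff [OF I])
    then have "projI I \<xi> = \<xi>"
      unfolding perpI_def oct_diff_eq_0_iff by simp
    with True show ?thesis
      by (simp add: S_Ixi_def Delta_eq_0_iff perpI_eq_0_iff [OF I])
  next
    case False
    then show ?thesis
      by (simp add: S_Ixi_def perpI_eq_0_iff [OF I])
  qed
  finally show ?thesis .
qed

theorem lemma2p16:
  fixes I \<xi> :: oct
  assumes "I \<in> osph"
  shows "(\<forall>x. normal_fun (gIxi I \<xi>) x =
              ocr ((onorm (Delta (projI I \<xi>) x))\<^sup>2
                   + 2 * (onorm (perpI I \<xi>))\<^sup>2 *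
                       ((onorm x)\<^sup>2 - 2 * reP x * reP (projI I \<xi>) + (onorm (projI I \<xi>))\<^sup>2)
                   + (onorm (perpI I \<xi>))^4)
         \<and> (onorm (Delta (projI I \<xi>) x))\<^sup>2
                   + 2 * (onorm (perpI I \<xi>))\<^sup>2 *
                       ((onorm x)\<^sup>2 - 2 * reP x * reP (projI I \<xi>) + (onorm (projI I \<xi>))\<^sup>2)
                   + (onorm (perpI I \<xi>))^4 \<ge> 0)
       \<and> {x. normal_fun (gIxi I \<xi>) x = 0} = S_Ixi I \<xi>"
proof -
  have sum_nonneg: "0 \<le> d\<^sup>2 + 2 * e\<^sup>2 * M + e^4" if "0 \<le> M" for d e M :: real
    using that by (simp add: add_nonneg_nonneg)
  have "(onorm (Delta (projI I \<xi>) x))\<^sup>2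
          + 2 * (onorm (perpI I \<xi>))\<^sup>2 *
              ((onorm x)\<^sup>2 - 2 * reP x * reP (projI I \<xi>) + (onorm (projI I \<xi>))\<^sup>2)
          + (onorm (perpI I \<xi>))^4 \<ge> 0" for x
    by (rule sum_nonneg [OF onorm_sq_minus_reP_nonneg])
  moreover have "{x. normal_fun (gIxi I \<xi>) x = 0} = S_Ixi I \<xi>"
    using normal_fun_gIxi_eq_0_iff [OF assms] by blast
  ultimately show ?thesis
    using normal_fun_gIxi_eq [OF assms] by blast
qed

end
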